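(* Let $A$ be a $d\times n$ integer matrix with columns $\underline a_1,\dots,\underline a_n$, put $\underline a_0=0$, and let $\widetilde A$ be the $(d+1)\times(n+1)$ matrix with columns $(1,\underline a_i)$, $i=0,\dots,n$. Assume $\mathbb{Z}\widetilde A=\mathbb{Z}^{d+1}$, $\mathbb{N}\widetilde A=\mathbb{Z}^{d+1}\cap\mathbb{R}_{\geq0}\widetilde A$, and $\mathrm{int}(\mathbb{N}\widetilde A)=\mathbb{N}\widetilde A+\widetilde c$ for some $\widetilde c\in\mathbb{N}\widetilde A$. For $u\in\{0,\dots,n\}$ let $A_u$ be the $d\times n$ matrix with columns $\underline a_i-\underline a_u$, $i\in\{0,\dots,n\}\setminus\{u\}$. Then (1) $\mathbb{Z}A_u=\mathbb{Z}^d$; (2) $\mathbb{N}A_u=\mathbb{Z}^d\cap\mathbb{R}_{\geq0}A_u$; (3) $\mathrm{int}(\mathbb{N}A_u)=\mathbb{N}A_u+c$ for some $c\in\mathbb{N}A_u$.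
   Context: For an integer matrix $M$ with $m$ rows, $\mathbb{Z}M$, $\mathbb{N}M$, $\mathbb{R}_{\ge0}M$ denote the group, semigroup and real cone generated by its columns, and $\mathrm{int}(\mathbb{N}M)=\mathbb{Z}^m\cap(\mathbb{R}_{\geq0}M)^\circ$ with $(\cdot)^\circ$ the topological interior. *)

theory Defs
  imports "HOL-Analysis.Analysis"
begin

text \<open>A matrix with m rows is represented by the (finite) set S of its columns,
  each column an integer vector of type int^'m.  The generated group, semigroup
  and real cone only depend on this set.\<close>

definition rvec :: "int^'m \<Rightarrow> real^'m" where
  "rvec z = (\<chi> j. real_of_int (z $ j))"

definition zgroup :: "(int^'m) set \<Rightarrow> (int^'m) set" where
  "zgroup S = {\<Sum>v\<in>S. k v *s v | k :: int^'m \<Rightarrow> int. True}"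

definition nsemigroup :: "(int^'m) set \<Rightarrow> (int^'m) set" where
  "nsemigroup S = {\<Sum>v\<in>S. int (k v) *s v | k :: int^'m \<Rightarrow> nat. True}"

definition rcone :: "(int^'m) set \<Rightarrow> (real^'m) set" where
  "rcone S = {\<Sum>v\<in>S. c v *s rvec v | c :: int^'m \<Rightarrow> real. \<forall>v\<in>S. c v \<ge> 0}"

definition lattice_pts :: "(int^'m) set \<Rightarrow> (int^'m) set" where
  "lattice_pts S = {z. rvec z \<in> rcone S}"

text \<open>int(NM) = Z^m intersected with the topological interior of R_{>=0} M.\<close>
definition int_pts :: "(int^'m) set \<Rightarrow> (int^'m) set" where
  "int_pts S = {z. rvec z \<in> interior (rcone S)}"

text \<open>The homogenization (1, x) of a vector x in Z^d, as a vector indexed by 'd option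
  (None is the new first coordinate).\<close>
definition homog :: "int^'d \<Rightarrow> int^('d option)" where
  "homog x = (\<chi> j. case j of None \<Rightarrow> 1 | Some i \<Rightarrow> x $ i)"

end

theory Submission
  imports Defs
begin

text \<open>Let \<open>H\<close> be the homogenized matrix with columns \<open>(1, a\<^sub>i)\<close>, and \<open>c\<^sub>H\<close> the shift with
  \<open>int(\<nat>H) = \<nat>H + c\<^sub>H\<close>. The linear map \<open>\<pi>(t, x) = x - t a\<^sub>u\<close> from \<open>\<int>\<^sup>d\<^sup>+\<^sup>1\<close> onto \<open>\<int>\<^sup>d\<close>
  sends \<open>(1, a\<^sub>i)\<close> to \<open>a\<^sub>i - a\<^sub>u\<close> and kills \<open>(1, a\<^sub>u)\<close>, so it maps \<open>\<int>H\<close>, \<open>\<nat>H\<close> and the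
  real cone of \<open>H\<close> onto the corresponding objects for \<open>A\<^sub>u\<close>; being a linear surjection, it
  also maps the interior of the convex cone of \<open>H\<close> (nonempty, as it contains \<open>c\<^sub>H\<close>) onto the
  interior of the cone of \<open>A\<^sub>u\<close>. Conversely, a point of the cone of \<open>H\<close> (or of its interior)
  lying over an integer point can be pushed to integral height by adding a nonnegative
  multiple of \<open>(1, a\<^sub>u)\<close>, and then it is itself an integer point. Lifting, applying the
  hypotheses for \<open>H\<close> and projecting back gives all three claims, with \<open>c = \<pi>(c\<^sub>H)\<close>.\<close>

lemma sum_image_coeffs_from_index:
  fixes h :: "'c::comm_monoid_add \<Rightarrow> 'v \<Rightarrow> 'w::comm_monoid_add" and g :: "'i \<Rightarrow> 'v"
  assumes fin: "finite I" and h0: "\<And>v. h 0 v = 0"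
    and hadd: "\<And>a b v. h (a + b) v = h a v + h b v"
    and P0: "P 0" and Padd: "\<And>a b. P a \<Longrightarrow> P b \<Longrightarrow> P (a + b)"
    and kP: "\<forall>i\<in>I. P (k i)"
  shows "\<exists>k'. (\<forall>v\<in>g ` I. P (k' v)) \<and> (\<Sum>v\<in>g ` I. h (k' v) v) = (\<Sum>i\<in>I. h (k i) (g i))"
proof (intro exI conjI)
  let ?k' = "\<lambda>v. \<Sum>i\<in>{i\<in>I. g i = v}. k i"
  have P_sum: "finite A \<Longrightarrow> \<forall>i\<in>A. P (f i) \<Longrightarrow> P (sum f A)" for A and f :: "'i \<Rightarrow> 'c"
    by (induction A rule: finite_induct) (auto simp: P0 Padd)
  have h_sum: "finite A \<Longrightarrow> h (sum f A) v = (\<Sum>i\<in>A. h (f i) v)" for A and f :: "'i \<Rightarrow> 'c" and v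
    by (induction A rule: finite_induct) (auto simp: h0 hadd)
  show "\<forall>v\<in>g ` I. P (?k' v)" using P_sum kP fin by auto
  have "(\<Sum>v\<in>g ` I. h (?k' v) v) = (\<Sum>v\<in>g ` I. \<Sum>i\<in>{i\<in>I. g i = v}. h (k i) (g i))"
    using fin by (intro sum.cong refl) (simp add: h_sum)
  also have "\<dots> = (\<Sum>i\<in>I. h (k i) (g i))" by (rule sum.image_gen[OF fin, symmetric])
  finally show "(\<Sum>v\<in>g ` I. h (?k' v) v) = (\<Sum>i\<in>I. h (k i) (g i))" .
qed

lemma sum_index_coeffs_from_image:
  fixes h :: "'c::zero \<Rightarrow> 'v \<Rightarrow> 'w::comm_monoid_add" and g :: "'i \<Rightarrow> 'v"
  assumes fin: "finite I" and h0: "\<And>v. h 0 v = 0" and P0: "P 0"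
    and kP: "\<forall>v\<in>g ` I. P (k v)"
  shows "\<exists>k'. (\<forall>i\<in>I. P (k' i)) \<and> (\<Sum>i\<in>I. h (k' i) (g i)) = (\<Sum>v\<in>g ` I. h (k v) v)"
proof (intro exI conjI)
  \<comment> \<open>put the whole coefficient of a column on one chosen index of its fibre\<close>
  let ?k' = "\<lambda>i. if i = inv_into I g (g i) then k (g i) else 0"
  show "\<forall>i\<in>I. P (?k' i)" using kP P0 by auto
  have "(\<Sum>i\<in>I. h (?k' i) (g i)) = (\<Sum>v\<in>g ` I. \<Sum>i\<in>{i\<in>I. g i = v}. h (?k' i) (g i))"
    by (rule sum.image_gen[OF fin])
  also have "\<dots> = (\<Sum>v\<in>g ` I. h (k v) v)"
  proof (rule sum.cong[OF refl])
    fix v assume v: "v \<in> g ` I"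
    let ?j = "inv_into I g v"
    have j: "?j \<in> {i\<in>I. g i = v}" using v by (auto intro: inv_into_into f_inv_into_f)
    have "(\<Sum>i\<in>{i\<in>I. g i = v}. h (?k' i) (g i)) = (\<Sum>i\<in>{i\<in>I. g i = v}. if i = ?j then h (k v) v else 0)"
      by (rule sum.cong) (auto simp: h0)
    also have "\<dots> = h (k v) v" using j fin by simp
    finally show "(\<Sum>i\<in>{i\<in>I. g i = v}. h (?k' i) (g i)) = h (k v) v" .
  qed
  finally show "(\<Sum>i\<in>I. h (?k' i) (g i)) = (\<Sum>v\<in>g ` I. h (k v) v)" .
qed

lemma sum_image_coeffs_iff:
  fixes h :: "'c::comm_monoid_add \<Rightarrow> 'v \<Rightarrow> 'w::comm_monoid_add" and g :: "'i \<Rightarrow> 'v"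
  assumes "finite I" "\<And>v. h 0 v = 0" "\<And>a b v. h (a + b) v = h a v + h b v"
    and "P 0" "\<And>a b. P a \<Longrightarrow> P b \<Longrightarrow> P (a + b)"
  shows "(\<exists>k. (\<forall>v\<in>g ` I. P (k v)) \<and> x = (\<Sum>v\<in>g ` I. h (k v) v))
     \<longleftrightarrow> (\<exists>k. (\<forall>i\<in>I. P (k i)) \<and> x = (\<Sum>i\<in>I. h (k i) (g i)))"
proof
  assume "\<exists>k. (\<forall>v\<in>g ` I. P (k v)) \<and> x = (\<Sum>v\<in>g ` I. h (k v) v)"
  then obtain k where "\<forall>v\<in>g ` I. P (k v)" "x = (\<Sum>v\<in>g ` I. h (k v) v)" by blast
  with sum_index_coeffs_from_image[where h = h and P = P and g = g and k = k, OF assms(1,2,4)]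
  show "\<exists>k. (\<forall>i\<in>I. P (k i)) \<and> x = (\<Sum>i\<in>I. h (k i) (g i))" by auto
next
  assume "\<exists>k. (\<forall>i\<in>I. P (k i)) \<and> x = (\<Sum>i\<in>I. h (k i) (g i))"
  then obtain k where "\<forall>i\<in>I. P (k i)" "x = (\<Sum>i\<in>I. h (k i) (g i))" by blast
  with sum_image_coeffs_from_index[where h = h and P = P and g = g and k = k, OF assms]
  show "\<exists>k. (\<forall>v\<in>g ` I. P (k v)) \<and> x = (\<Sum>v\<in>g ` I. h (k v) v)" by auto
qed

lemma zgroup_image:
  fixes g :: "'i \<Rightarrow> int^'m"
  assumes "finite I"
  shows "zgroup (g ` I) = {\<Sum>i\<in>I. k i *s g i | k. True}"
  using sum_image_coeffs_iff[where h = "\<lambda>c v. c *s v" and P = "\<lambda>_. True" and g = g, OF assms]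
  by (simp add: zgroup_def vector_sadd_rdistrib)

lemma nsemigroup_image:
  fixes g :: "'i \<Rightarrow> int^'m"
  assumes "finite I"
  shows "nsemigroup (g ` I) = {\<Sum>i\<in>I. int (k i) *s g i | k. True}"
  using sum_image_coeffs_iff[where h = "\<lambda>c v. int c *s v" and P = "\<lambda>_. True" and g = g, OF assms]
  by (simp add: nsemigroup_def vector_sadd_rdistrib)

lemma rcone_image:
  fixes g :: "'i \<Rightarrow> int^'m"
  assumes "finite I"
  shows "rcone (g ` I) = {\<Sum>i\<in>I. c i *\<^sub>R rvec (g i) | c. \<forall>i\<in>I. c i \<ge> 0}"
  using sum_image_coeffs_iff[where h = "\<lambda>c v. c *\<^sub>R rvec v" and P = "\<lambda>c. c \<ge> 0" and g = g, OF assms]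
  by (simp add: rcone_def scalar_mult_eq_scaleR scaleR_add_left set_eq_iff conj_commute)

lemma rvec_nth [simp]: "rvec z $ j = real_of_int (z $ j)"
  by (simp add: rvec_def)

lemma rvec_zero [simp]: "rvec 0 = 0"
  by (simp add: vec_eq_iff)

lemma zero_mem_nsemigroup: "0 \<in> nsemigroup S"
  unfolding nsemigroup_def by (intro CollectI exI[of _ "\<lambda>_. 0"]) simp

lemma rcone_add:
  assumes "x \<in> rcone S" "y \<in> rcone S"
  shows "x + y \<in> rcone S"
proof -
  obtain c c' where "\<forall>v\<in>S. c v \<ge> 0" "x = (\<Sum>v\<in>S. c v *s rvec v)"
    and "\<forall>v\<in>S. c' v \<ge> 0" "y = (\<Sum>v\<in>S. c' v *s rvec v)"
    using assms by (auto simp: rcone_def)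
  then show ?thesis
    unfolding rcone_def
    by (intro CollectI exI[of _ "\<lambda>v. c v + c' v"]) (simp add: sum.distrib)
qed

lemma rcone_scaleR:
  assumes "x \<in> rcone S" "a \<ge> 0"
  shows "a *\<^sub>R x \<in> rcone S"
proof -
  obtain c where "\<forall>v\<in>S. c v \<ge> 0" "x = (\<Sum>v\<in>S. c v *s rvec v)"
    using assms by (auto simp: rcone_def)
  then show ?thesis
    using assms(2) unfolding rcone_def
    by (intro CollectI exI[of _ "\<lambda>v. a * c v"])
      (simp add: scalar_mult_eq_scaleR scaleR_sum_right)
qed

lemma convex_rcone: "convex (rcone S)"
  by (intro convexI rcone_add rcone_scaleR) simp_all

lemma rvec_mem_rcone:
  assumes "finite S" "v \<in> S"
  shows "rvec v \<in> rcone S"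
  unfolding rcone_def using assms
  by (intro CollectI exI[of _ "\<lambda>w. if w = v then 1 else 0"])
    (simp add: if_distrib[of "\<lambda>c. c *s _"] cong: if_cong)

lemma nsemigroup_subset_lattice_pts: "nsemigroup S \<subseteq> lattice_pts S"
proof
  fix z assume "z \<in> nsemigroup S"
  then obtain k where "z = (\<Sum>v\<in>S. int (k v) *s v)" by (auto simp: nsemigroup_def)
  then have "rvec z = (\<Sum>v\<in>S. real (k v) *s rvec v)"
    by (simp add: vec_eq_iff rvec_def)
  then show "z \<in> lattice_pts S" unfolding lattice_pts_def rcone_def by auto
qed

text \<open>\<open>dehomog w\<close> is the projection \<open>(t, x) \<mapsto> x - t w\<close> along \<open>homog w\<close>, and
  \<open>lift_to_height w y t\<close> is the point at height \<open>t\<close> over \<open>y\<close>.\<close>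

definition dehomog :: "'a::comm_ring_1^'d \<Rightarrow> 'a^('d option) \<Rightarrow> 'a^'d" where
  "dehomog w z = (\<chi> j. z $ Some j - z $ None * w $ j)"

definition lift_to_height :: "'a::comm_ring_1^'d \<Rightarrow> 'a^'d \<Rightarrow> 'a \<Rightarrow> 'a^('d option)" where
  "lift_to_height w y t = (\<chi> j. case j of None \<Rightarrow> t | Some i \<Rightarrow> y $ i + t * w $ i)"

lemma dehomog_add: "dehomog w (x + y) = dehomog w x + dehomog w y"
  by (simp add: vec_eq_iff dehomog_def algebra_simps)

lemma dehomog_smult: "dehomog w (c *s x) = c *s dehomog w x"
  by (simp add: vec_eq_iff dehomog_def algebra_simps)

lemma dehomog_sum: "dehomog w (sum f A) = (\<Sum>i\<in>A. dehomog w (f i))"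
  by (simp add: vec_eq_iff dehomog_def sum_subtractf sum_distrib_right)

lemma dehomog_homog: "dehomog w (homog x) = x - w"
  by (simp add: vec_eq_iff dehomog_def homog_def)

lemma dehomog_lift_to_height: "dehomog w (lift_to_height w y t) = y"
  by (simp add: vec_eq_iff dehomog_def lift_to_height_def)

lemma lift_to_height_dehomog: "lift_to_height w (dehomog w z) (z $ None) = z"
  by (simp add: vec_eq_iff dehomog_def lift_to_height_def split: option.split)

lemma rvec_dehomog: "rvec (dehomog w z) = dehomog (rvec w) (rvec z)"
  by (simp add: vec_eq_iff dehomog_def)

lemma rvec_lift_to_height: "rvec (lift_to_height w y t) = lift_to_height (rvec w) (rvec y) (of_int t)"
  by (simp add: vec_eq_iff lift_to_height_def split: option.split)

lemma linear_dehomog: "linear (dehomog (w :: real^'d))"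
  by (rule linearI) (simp_all add: vec_eq_iff dehomog_def algebra_simps)

lemma surj_dehomog: "surj (dehomog w)"
  using dehomog_lift_to_height by (rule surjI)

lemma interior_surjective_linear_image_convex:
  fixes f :: "'a::euclidean_space \<Rightarrow> 'b::euclidean_space"
  assumes "linear f" "surj f" "convex S" "interior S \<noteq> {}"
  shows "interior (f ` S) = f ` interior S"
proof -
  have rel: "f ` interior S = rel_interior (f ` S)"
    using rel_interior_convex_linear_image[OF assms(1,3)] rel_interior_nonempty_interior[OF assms(4)]
    by simp
  have "open (f ` interior S)"
    by (rule open_surjective_linear_image[OF open_interior assms(1,2)])
  then have "f ` interior S \<subseteq> interior (f ` S)"
    by (simp add: image_mono interior_maximal interior_subset)
  then have "interior (f ` S) \<noteq> {}" using assms(4) by blast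
  then show ?thesis using rel by (simp add: rel_interior_nonempty_interior)
qed

lemma add_mem_interior_if_translation_subset:
  fixes S :: "'a::real_normed_vector set"
  assumes "(+) p ` S \<subseteq> S" "x \<in> interior S"
  shows "p + x \<in> interior S"
  using interior_mono[OF assms(1)] assms(2) by (auto simp: interior_translation)

lemma exists_integral_height_lift:
  fixes w :: "int^'d" and S :: "(real^('d option)) set"
  assumes up: "\<And>x \<delta>. x \<in> S \<Longrightarrow> \<delta> \<ge> 0 \<Longrightarrow> x + \<delta> *\<^sub>R rvec (homog w) \<in> S"
    and q: "q \<in> S" "dehomog (rvec w) q = rvec y"
  shows "\<exists>t. rvec (lift_to_height w y t) \<in> S"
proof
  \<comment> \<open>moving along the kernel direction homog w of dehomog only changes the height\<close>
  define t where "t = \<lceil>q $ None\<rceil>"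
  define z where "z = q + (of_int t - q $ None) *\<^sub>R rvec (homog w)"
  have "z \<in> S" unfolding z_def t_def by (rule up[OF q(1)]) simp
  moreover have "dehomog (rvec w) z = rvec y"
    using q(2) linear_dehomog[of "rvec w"]
    by (simp add: z_def linear_add linear_scale flip: rvec_dehomog add: dehomog_homog)
  moreover have "z $ None = of_int t" by (simp add: z_def homog_def)
  ultimately show "rvec (lift_to_height w y t) \<in> S"
    using lift_to_height_dehomog[of "rvec w" z] by (simp add: rvec_lift_to_height)
qed

context
  fixes g :: "'i \<Rightarrow> int^'d" and I :: "'i set" and u :: 'i
  assumes finite_I: "finite I" and u_in_I: "u \<in> I"
begin

lemma dehomog_int_combination:
  "dehomog (g u) (\<Sum>i\<in>I. k i *s homog (g i)) = (\<Sum>i\<in>I - {u}. k i *s (g i - g u))"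
proof -
  have "dehomog (g u) (\<Sum>i\<in>I. k i *s homog (g i)) = (\<Sum>i\<in>I. k i *s (g i - g u))"
    by (simp add: dehomog_sum dehomog_smult dehomog_homog)
  also have "\<dots> = (\<Sum>i\<in>I - {u}. k i *s (g i - g u))"
    using finite_I u_in_I by (simp add: sum.remove)
  finally show ?thesis .
qed

lemma dehomog_real_combination:
  "dehomog (rvec (g u)) (\<Sum>i\<in>I. c i *\<^sub>R rvec (homog (g i))) = (\<Sum>i\<in>I - {u}. c i *\<^sub>R rvec (g i - g u))"
proof -
  have "dehomog (rvec (g u)) (\<Sum>i\<in>I. c i *\<^sub>R rvec (homog (g i))) = (\<Sum>i\<in>I. c i *\<^sub>R rvec (g i - g u))"
    using linear_dehomog[of "rvec (g u)"]
    by (simp add: linear_sum linear_scale flip: rvec_dehomog add: dehomog_homog)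
  also have "\<dots> = (\<Sum>i\<in>I - {u}. c i *\<^sub>R rvec (g i - g u))"
    using finite_I u_in_I by (simp add: sum.remove)
  finally show ?thesis .
qed

lemma zgroup_diffs:
  "zgroup ((\<lambda>i. g i - g u) ` (I - {u})) = dehomog (g u) ` zgroup ((\<lambda>i. homog (g i)) ` I)"
proof -
  have "zgroup ((\<lambda>i. g i - g u) ` (I - {u})) = {\<Sum>i\<in>I - {u}. k i *s (g i - g u) | k. True}"
    using finite_I by (simp add: zgroup_image)
  also have "\<dots> = dehomog (g u) ` {\<Sum>i\<in>I. k i *s homog (g i) | k. True}"
    unfolding dehomog_int_combination[symmetric] by blast
  finally show ?thesis using finite_I by (simp add: zgroup_image)
qed

lemma nsemigroup_diffs:
  "nsemigroup ((\<lambda>i. g i - g u) ` (I - {u})) = dehomog (g u) ` nsemigroup ((\<lambda>i. homog (g i)) ` I)"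
proof -
  have "nsemigroup ((\<lambda>i. g i - g u) ` (I - {u})) = {\<Sum>i\<in>I - {u}. int (k i) *s (g i - g u) | k. True}"
    using finite_I by (simp add: nsemigroup_image)
  also have "\<dots> = dehomog (g u) ` {\<Sum>i\<in>I. int (k i) *s homog (g i) | k. True}"
    unfolding dehomog_int_combination[symmetric] by blast
  finally show ?thesis using finite_I by (simp add: nsemigroup_image)
qed

lemma rcone_diffs:
  "rcone ((\<lambda>i. g i - g u) ` (I - {u})) = dehomog (rvec (g u)) ` rcone ((\<lambda>i. homog (g i)) ` I)"
proof -
  have "rcone ((\<lambda>i. g i - g u) ` (I - {u}))
      = {\<Sum>i\<in>I - {u}. c i *\<^sub>R rvec (g i - g u) | c. \<forall>i\<in>I - {u}. c i \<ge> 0}"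
    using finite_I by (simp add: rcone_image)
  also have "\<dots> = dehomog (rvec (g u)) ` {\<Sum>i\<in>I. c i *\<^sub>R rvec (homog (g i)) | c. \<forall>i\<in>I. c i \<ge> 0}"
  proof (intro equalityI subsetI)
    fix x assume "x \<in> {\<Sum>i\<in>I - {u}. c i *\<^sub>R rvec (g i - g u) | c. \<forall>i\<in>I - {u}. c i \<ge> 0}"
    then obtain c where "\<forall>i\<in>I - {u}. c i \<ge> 0" "x = (\<Sum>i\<in>I - {u}. c i *\<^sub>R rvec (g i - g u))"
      by blast
    \<comment> \<open>the coefficient of the generator homog (g u) is irrelevant, so set it to 0\<close>
    moreover have "(\<Sum>i\<in>I - {u}. c i *\<^sub>R rvec (g i - g u))
        = dehomog (rvec (g u)) (\<Sum>i\<in>I. (c(u := 0)) i *\<^sub>R rvec (homog (g i)))"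
      by (auto simp: dehomog_real_combination intro: sum.cong)
    ultimately show "x \<in> dehomog (rvec (g u)) ` {\<Sum>i\<in>I. c i *\<^sub>R rvec (homog (g i)) | c. \<forall>i\<in>I. c i \<ge> 0}"
      by force
  qed (auto simp: dehomog_real_combination)
  finally show ?thesis using finite_I by (simp add: rcone_image)
qed

lemma rcone_homs_add_homog:
  assumes "x \<in> rcone ((\<lambda>i. homog (g i)) ` I)" "\<delta> \<ge> 0"
  shows "x + \<delta> *\<^sub>R rvec (homog (g u)) \<in> rcone ((\<lambda>i. homog (g i)) ` I)"
  using assms finite_I u_in_I by (intro rcone_add rcone_scaleR rvec_mem_rcone) simp_all

lemma interior_rcone_homs_add_homog:
  assumes "x \<in> interior (rcone ((\<lambda>i. homog (g i)) ` I))" "\<delta> \<ge> 0"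
  shows "x + \<delta> *\<^sub>R rvec (homog (g u)) \<in> interior (rcone ((\<lambda>i. homog (g i)) ` I))"
  using add_mem_interior_if_translation_subset[OF _ assms(1), of "\<delta> *\<^sub>R rvec (homog (g u))"]
    rcone_homs_add_homog[OF _ assms(2)]
  by (auto simp: add.commute)

lemma interior_rcone_diffs:
  assumes "interior (rcone ((\<lambda>i. homog (g i)) ` I)) \<noteq> {}"
  shows "interior (rcone ((\<lambda>i. g i - g u) ` (I - {u})))
       = dehomog (rvec (g u)) ` interior (rcone ((\<lambda>i. homog (g i)) ` I))"
  unfolding rcone_diffs
  by (rule interior_surjective_linear_image_convex[OF linear_dehomog surj_dehomog convex_rcone assms])

lemma zgroup_diffs_eq_UNIV:
  assumes "zgroup ((\<lambda>i. homog (g i)) ` I) = UNIV"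
  shows "zgroup ((\<lambda>i. g i - g u) ` (I - {u})) = UNIV"
  using surj_dehomog by (simp add: zgroup_diffs assms)

lemma nsemigroup_diffs_eq_lattice_pts:
  assumes normal: "nsemigroup ((\<lambda>i. homog (g i)) ` I) = lattice_pts ((\<lambda>i. homog (g i)) ` I)"
  shows "nsemigroup ((\<lambda>i. g i - g u) ` (I - {u})) = lattice_pts ((\<lambda>i. g i - g u) ` (I - {u}))"
proof (rule subset_antisym[OF nsemigroup_subset_lattice_pts subsetI])
  fix y assume "y \<in> lattice_pts ((\<lambda>i. g i - g u) ` (I - {u}))"
  then obtain q where q: "q \<in> rcone ((\<lambda>i. homog (g i)) ` I)" "dehomog (rvec (g u)) q = rvec y"
    by (auto simp: lattice_pts_def rcone_diffs)
  obtain t where "rvec (lift_to_height (g u) y t) \<in> rcone ((\<lambda>i. homog (g i)) ` I)"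
    using exists_integral_height_lift[OF rcone_homs_add_homog q] by blast
  then have "lift_to_height (g u) y t \<in> nsemigroup ((\<lambda>i. homog (g i)) ` I)"
    by (simp add: normal lattice_pts_def)
  from imageI[OF this, of "dehomog (g u)"] show "y \<in> nsemigroup ((\<lambda>i. g i - g u) ` (I - {u}))"
    by (simp add: nsemigroup_diffs dehomog_lift_to_height)
qed

lemma int_pts_diffs:
  assumes int_pts: "int_pts ((\<lambda>i. homog (g i)) ` I) = (\<lambda>x. x + c) ` nsemigroup ((\<lambda>i. homog (g i)) ` I)"
  shows "int_pts ((\<lambda>i. g i - g u) ` (I - {u}))
       = (\<lambda>x. x + dehomog (g u) c) ` nsemigroup ((\<lambda>i. g i - g u) ` (I - {u}))"
proof -
  let ?H = "(\<lambda>i. homog (g i)) ` I"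
  have "0 + c \<in> int_pts ?H" unfolding int_pts by (rule imageI[OF zero_mem_nsemigroup])
  then have int_eq: "interior (rcone ((\<lambda>i. g i - g u) ` (I - {u}))) = dehomog (rvec (g u)) ` interior (rcone ?H)"
    by (intro interior_rcone_diffs) (auto simp: int_pts_def)
  show ?thesis
  proof (intro equalityI subsetI)
    fix y assume "y \<in> int_pts ((\<lambda>i. g i - g u) ` (I - {u}))"
    then obtain q where q: "q \<in> interior (rcone ?H)" "dehomog (rvec (g u)) q = rvec y"
      by (auto simp: int_pts_def int_eq)
    obtain t where "rvec (lift_to_height (g u) y t) \<in> interior (rcone ?H)"
      using exists_integral_height_lift[OF interior_rcone_homs_add_homog q] by blast
    then have "lift_to_height (g u) y t \<in> int_pts ?H" by (simp add: int_pts_def)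
    then obtain x where x: "x \<in> nsemigroup ?H" "lift_to_height (g u) y t = x + c"
      unfolding int_pts by blast
    have "y = dehomog (g u) (lift_to_height (g u) y t)" by (simp only: dehomog_lift_to_height)
    also have "\<dots> = dehomog (g u) x + dehomog (g u) c" by (simp only: x(2) dehomog_add)
    finally show "y \<in> (\<lambda>x. x + dehomog (g u) c) ` nsemigroup ((\<lambda>i. g i - g u) ` (I - {u}))"
      using x(1) by (simp add: nsemigroup_diffs)
  next
    fix y assume "y \<in> (\<lambda>x. x + dehomog (g u) c) ` nsemigroup ((\<lambda>i. g i - g u) ` (I - {u}))"
    then obtain x where "x \<in> nsemigroup ?H" "y = dehomog (g u) (x + c)"
      by (auto simp: nsemigroup_diffs dehomog_add)
    moreover from \<open>x \<in> nsemigroup ?H\<close> have "x + c \<in> int_pts ?H"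
      unfolding int_pts by (rule imageI)
    ultimately show "y \<in> int_pts ((\<lambda>i. g i - g u) ` (I - {u}))"
      by (simp add: int_pts_def int_eq rvec_dehomog)
  qed
qed

end

theorem lemma3p4:
  fixes a :: "nat \<Rightarrow> int^'d::finite" and n :: nat
  defines "a0 \<equiv> (\<lambda>i. if i = 0 then 0 else a i)"
  assumes hZ: "zgroup ((\<lambda>i. homog (a0 i)) ` {0..n}) = UNIV"
    and hN: "nsemigroup ((\<lambda>i. homog (a0 i)) ` {0..n})
             = lattice_pts ((\<lambda>i. homog (a0 i)) ` {0..n})"
    and hint: "\<exists>c \<in> nsemigroup ((\<lambda>i. homog (a0 i)) ` {0..n}).
             int_pts ((\<lambda>i. homog (a0 i)) ` {0..n})
             = (\<lambda>x. x + c) ` nsemigroup ((\<lambda>i. homog (a0 i)) ` {0..n})"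
    and u: "u \<le> n"
  shows "zgroup ((\<lambda>i. a0 i - a0 u) ` ({0..n} - {u})) = UNIV
       \<and> nsemigroup ((\<lambda>i. a0 i - a0 u) ` ({0..n} - {u}))
           = lattice_pts ((\<lambda>i. a0 i - a0 u) ` ({0..n} - {u}))
       \<and> (\<exists>c \<in> nsemigroup ((\<lambda>i. a0 i - a0 u) ` ({0..n} - {u})).
            int_pts ((\<lambda>i. a0 i - a0 u) ` ({0..n} - {u}))
            = (\<lambda>x. x + c) ` nsemigroup ((\<lambda>i. a0 i - a0 u) ` ({0..n} - {u})))"
proof -
  have I: "finite {0..n}" "u \<in> {0..n}" using u by simp_all
  obtain c where c: "c \<in> nsemigroup ((\<lambda>i. homog (a0 i)) ` {0..n})"
    "int_pts ((\<lambda>i. homog (a0 i)) ` {0..n}) = (\<lambda>x. x + c) ` nsemigroup ((\<lambda>i. homog (a0 i)) ` {0..n})"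
    using hint by blast
  have "dehomog (a0 u) c \<in> nsemigroup ((\<lambda>i. a0 i - a0 u) ` ({0..n} - {u}))"
    using c(1) by (simp add: nsemigroup_diffs[OF I])
  then show ?thesis
    using zgroup_diffs_eq_UNIV[OF I hZ] nsemigroup_diffs_eq_lattice_pts[OF I hN] int_pts_diffs[OF I c(2)]
    by blast
qed

end
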